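(* Let $\mathbf K\in\mathcal T_h$ with invertible affine map $T_{\mathbf K}:\widehat{\mathbf K}\to\mathbf K$, and let $w\in\mathcal{NC}_0^h$. Put $\hat w=w|_{\mathbf K}\circ T_{\mathbf K}\in\widehat{\mathbb P}^{(1)}_{SK}$. Then for each $i\in\{1,2,3\}$, writing $\hat y$ for the pair of coordinates other than $\hat x_i$, the functions $$\hat y\mapsto \hat w|_{\hat x_i=1}(\hat y)-\bigl(\widehat{\mathcal I}^{x_i^+}\hat w\bigr)(\hat y)\quad\text{and}\quad \hat y\mapsto \hat w|_{\hat x_i=-1}(\hat y)-\bigl(\widehat{\mathcal I}^{x_i^-}\hat w\bigr)(\hat y),\qquad \hat y\in[-1,1]^2,$$ coincide; equivalently, $w|_{F_{\mathbf K}^{x_i^+}}-\mathcal I_F^{x_i^+}(w|_{\mathbf K})$ and $w|_{F_{\mathbf K}^{x_i^-}}-\mathcal I_F^{x_i^-}(w|_{\mathbf K})$ agree at corresponding points $T_{\mathbf K}(\hat x)$ of the two opposite faces (points with the same $\hat y$).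
   Context: Let $\widehat{\mathbf K}=[-1,1]^3$ with coordinates $(\hat x_1,\hat x_2,\hat x_3)$; $P_2$ denotes polynomials of total degree at most $2$, and $\widehat{\mathbb P}^{(1)}_{SK}=P_2\oplus\mathrm{Span}\{\hat x_1\hat x_2\hat x_3,\hat x_1^2\hat x_2,\hat x_2^2\hat x_3,\hat x_3^2\hat x_1\}$. Let $\Omega\subset\mathbb R^3$ be a parallelepiped domain with boundary $\Gamma$, $\mathcal T_h$ a partition of $\Omega$ into parallelepipeds, each $\mathbf K=T_{\mathbf K}(\widehat{\mathbf K})$ with $T_{\mathbf K}$ invertible affine; $\mathcal{NC}_0^h$ is the space of functions $\phi$ with $\phi|_{\mathbf K}\circ T_{\mathbf K}\in\widehat{\mathbb P}^{(1)}_{SK}$ for all $\mathbf K$, continuous at all element vertices and face-centroids, and vanishing at those on $\Gamma$. Face interpolation: on the faces $\hat x_1=\pm1$ of $\widehat{\mathbf K}$ use the space $\mathrm{Span}\{1,\hat x_2,\hat x_3,\hat x_2\hat x_3,\hat x_3^2\}$; on the faces $\hat x_2=\pm1$ the space $\mathrm{Span}\{1,\hat x_3,\hat x_1,\hat x_3\hat x_1,\hat x_1^2\}$; on the faces $\hat x_3=\pm1$ the space $\mathrm{Span}\{1,\hat x_1,\hat x_2,\hat x_1\hat x_2,\hat x_2^2\}$. For a continuous $g$ on $\widehat{\mathbf K}$, $\widehat{\mathcal I}^{x_i^\pm}g$ is the unique element of the corresponding space (a function of the two coordinates other than $\hat x_i$) that agrees with $g$ at the four vertices and at the centroid of the face $\hat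 x_i=\pm1$. On $\mathbf K$, $F_{\mathbf K}^{x_i^\pm}=T_{\mathbf K}(\{\hat x_i=\pm1\})$ and $\mathcal I_F^{x_i^\pm}(w|_{\mathbf K})=(\widehat{\mathcal I}^{x_i^\pm}(w|_{\mathbf K}\circ T_{\mathbf K}))\circ T_{\mathbf K}^{-1}$ on that face. *)

theory Defs
  imports "HOL-Analysis.Analysis"
begin

definition Kref :: "(real^3) set" where
  "Kref = {x. \<forall>j. \<bar>x $ j\<bar> \<le> 1}"

definition affine_invertible :: "(real^3 \<Rightarrow> real^3) \<Rightarrow> bool" where
  "affine_invertible T \<longleftrightarrow> (\<exists>A b. invertible (A :: real^3^3) \<and> (\<forall>x. T x = A *v x + b))"

definition in_PSK :: "(real^3 \<Rightarrow> real) \<Rightarrow> bool" where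
  "in_PSK f \<longleftrightarrow> (\<exists>c :: nat \<Rightarrow> real. \<forall>x\<in>Kref.
     f x = c 0 + c 1 * x$1 + c 2 * x$2 + c 3 * x$3
         + c 4 * (x$1)^2 + c 5 * (x$2)^2 + c 6 * (x$3)^2
         + c 7 * x$1 * x$2 + c 8 * x$2 * x$3 + c 9 * x$3 * x$1
         + c 10 * x$1 * x$2 * x$3 + c 11 * (x$1)^2 * x$2
         + c 12 * (x$2)^2 * x$3 + c 13 * (x$3)^2 * x$1)"

text \<open>Point on the face x_i = sigma of Kref, with the other coordinates
  (x_{i+1}, x_{i+2}) (cyclically) equal to (s,t).  For i=1: (x2,x3); i=2: (x3,x1); i=3: (x1,x2).\<close>
definition facepoint :: "3 \<Rightarrow> real \<Rightarrow> real \<Rightarrow> real \<Rightarrow> real^3" where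
  "facepoint i \<sigma> s t = (\<chi> j. if j = i then \<sigma> else if j = i + 1 then s else t)"

definition face_space :: "(real \<Rightarrow> real \<Rightarrow> real) set" where
  "face_space = {f. \<exists>c0 c1 c2 c3 c4. \<forall>s t. f s t = c0 + c1 * s + c2 * t + c3 * s * t + c4 * t^2}"

definition face_interp :: "3 \<Rightarrow> real \<Rightarrow> (real^3 \<Rightarrow> real) \<Rightarrow> real \<Rightarrow> real \<Rightarrow> real" where
  "face_interp i \<sigma> g = (THE f. f \<in> face_space
      \<and> (\<forall>s\<in>{-1,1}. \<forall>t\<in>{-1,1}. f s t = g (facepoint i \<sigma> s t))
      \<and> f 0 0 = g (facepoint i \<sigma> 0 0))"

definition parallelepiped :: "(real^3) set \<Rightarrow> bool" where
  "parallelepiped \<Omega> \<longleftrightarrow> (\<exists>S. affine_invertible S \<and> \<Omega> = S ` Kref)"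

text \<open>A partition of Omega into parallelepipeds, each element given by its affine map T_K.\<close>
definition partition_pp :: "(real^3) set \<Rightarrow> (real^3 \<Rightarrow> real^3) set \<Rightarrow> bool" where
  "partition_pp \<Omega> Th \<longleftrightarrow> finite Th \<and> (\<forall>T\<in>Th. affine_invertible T)
     \<and> \<Union>((\<lambda>T. T ` Kref) ` Th) = \<Omega>
     \<and> (\<forall>T1\<in>Th. \<forall>T2\<in>Th. T1 \<noteq> T2 \<longrightarrow> interior (T1 ` Kref) \<inter> interior (T2 ` Kref) = {})"

definition nodes :: "(real^3 \<Rightarrow> real^3) \<Rightarrow> (real^3) set" where
  "nodes T = T ` ({x. \<forall>j. x$j \<in> {-1,1}}
                 \<union> {x. \<exists>j. x$j \<in> {-1,1} \<and> (\<forall>k. k \<noteq> j \<longrightarrow> x$k = 0)})"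

text \<open>A nonconforming function is given elementwise: w T is w restricted to the element T ` Kref.\<close>
definition NC0h :: "(real^3) set \<Rightarrow> (real^3 \<Rightarrow> real^3) set
                     \<Rightarrow> ((real^3 \<Rightarrow> real^3) \<Rightarrow> real^3 \<Rightarrow> real) \<Rightarrow> bool" where
  "NC0h \<Omega> Th w \<longleftrightarrow>
     (\<forall>T\<in>Th. in_PSK (\<lambda>x. w T (T x)))
   \<and> (\<forall>T1\<in>Th. \<forall>T2\<in>Th. \<forall>p\<in>nodes T1 \<inter> nodes T2. w T1 p = w T2 p)
   \<and> (\<forall>T\<in>Th. \<forall>p\<in>nodes T. p \<in> frontier \<Omega> \<longrightarrow> w T p = 0)"

end

theory Submission
  imports Defs
begin

text \<open>On the face \<open>x\<^sub>i = \<sigma>\<close>, with face coordinates \<open>(s,t)\<close>, every function of the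
  space P_SK restricts to an element of the face interpolation space plus \<open>a s\<^sup>2 + b s\<^sup>2 t\<close>,
  where \<open>a\<close> and \<open>b\<close> are coefficients of the volume polynomial that do not depend on \<open>\<sigma>\<close>.
  The face interpolant reproduces the face-space part exactly and replaces \<open>s\<^sup>2\<close> by \<open>t\<^sup>2\<close> and
  \<open>s\<^sup>2 t\<close> by \<open>t\<close> (they agree at the vertices, where \<open>s\<^sup>2 = 1\<close>, and at the centroid).
  Hence the interpolation error is \<open>a (s\<^sup>2 - t\<^sup>2) + b (s\<^sup>2 t - t)\<close> on both opposite faces.\<close>

lemma face_space_eqI:
  assumes "f \<in> face_space" "h \<in> face_space"
    and "\<forall>s\<in>{-1,1}. \<forall>t\<in>{-1,1}. f s t = h s t" and "f 0 0 = h 0 0"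
  shows "f = h"
proof -
  obtain a0 a1 a2 a3 a4 where f: "\<And>s t. f s t = a0 + a1 * s + a2 * t + a3 * s * t + a4 * t^2"
    using assms(1) by (auto simp: face_space_def)
  obtain b0 b1 b2 b3 b4 where h: "\<And>s t. h s t = b0 + b1 * s + b2 * t + b3 * s * t + b4 * t^2"
    using assms(2) by (auto simp: face_space_def)
  have "a0 + a1 + a2 + a3 + a4 = b0 + b1 + b2 + b3 + b4"
    "a0 + a1 - a2 - a3 + a4 = b0 + b1 - b2 - b3 + b4"
    "a0 - a1 + a2 - a3 + a4 = b0 - b1 + b2 - b3 + b4"
    "a0 - a1 - a2 + a3 + a4 = b0 - b1 - b2 + b3 + b4"
    "a0 = b0"
    using assms(3,4) f[of 1 1] f[of 1 "-1"] f[of "-1" 1] f[of "-1" "-1"] f[of 0 0]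
      h[of 1 1] h[of 1 "-1"] h[of "-1" 1] h[of "-1" "-1"] h[of 0 0] by auto
  then have "a0 = b0" "a1 = b1" "a2 = b2" "a3 = b3" "a4 = b4" by linarith+
  then show "f = h" by (intro ext) (simp add: f h)
qed

lemma face_interp_eqI:
  assumes "f \<in> face_space"
    and "\<forall>s\<in>{-1,1}. \<forall>t\<in>{-1,1}. f s t = g (facepoint i \<sigma> s t)"
    and "f 0 0 = g (facepoint i \<sigma> 0 0)"
  shows "face_interp i \<sigma> g = f"
  unfolding face_interp_def
proof (rule the_equality)
  fix h
  assume "h \<in> face_space \<and> (\<forall>s\<in>{-1,1}. \<forall>t\<in>{-1,1}. h s t = g (facepoint i \<sigma> s t))
    \<and> h 0 0 = g (facepoint i \<sigma> 0 0)"
  with assms show "h = f" by (intro face_space_eqI) auto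
qed (use assms in auto)

lemma face_space_add_linear_quadratic:
  assumes "p \<in> face_space"
  shows "(\<lambda>s t. p s t + a * t^2 + b * t) \<in> face_space"
proof -
  obtain c0 c1 c2 c3 c4 where "\<And>s t. p s t = c0 + c1 * s + c2 * t + c3 * s * t + c4 * t^2"
    using assms by (auto simp: face_space_def)
  then have "\<forall>s t. p s t + a * t^2 + b * t = c0 + c1 * s + (c2 + b) * t + c3 * s * t + (c4 + a) * t^2"
    by (simp add: algebra_simps)
  then show ?thesis unfolding face_space_def by blast
qed

lemma face_interp_error:
  assumes p: "p \<in> face_space"
    and g: "\<And>s t. \<bar>s\<bar> \<le> 1 \<Longrightarrow> \<bar>t\<bar> \<le> 1 \<Longrightarrow>
              g (facepoint i \<sigma> s t) = p s t + a * s^2 + b * s^2 * t"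
    and "\<bar>s\<bar> \<le> 1" "\<bar>t\<bar> \<le> 1"
  shows "g (facepoint i \<sigma> s t) - face_interp i \<sigma> g s t = a * (s^2 - t^2) + b * (s^2 * t - t)"
proof -
  have "face_interp i \<sigma> g = (\<lambda>s t. p s t + a * t^2 + b * t)"
    by (rule face_interp_eqI) (auto simp: face_space_add_linear_quadratic[OF p] g)
  then show ?thesis using g assms(3,4) by (simp add: algebra_simps)
qed

lemma facepoint_Kref:
  assumes "\<bar>\<sigma>\<bar> \<le> 1" "\<bar>s\<bar> \<le> 1" "\<bar>t\<bar> \<le> 1"
  shows "facepoint i \<sigma> s t \<in> Kref"
  using assms by (auto simp: Kref_def facepoint_def)

lemma in_PSK_face_restriction:
  assumes "in_PSK g"
  obtains a b where "\<And>\<sigma>. \<bar>\<sigma>\<bar> \<le> 1 \<Longrightarrow> \<exists>p\<in>face_space. \<forall>s t. \<bar>s\<bar> \<le> 1 \<longrightarrow> \<bar>t\<bar> \<le> 1 \<longrightarrow>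
    g (facepoint i \<sigma> s t) = p s t + a * s^2 + b * s^2 * t"
proof -
  obtain c :: "nat \<Rightarrow> real" where c: "\<And>x. x \<in> Kref \<Longrightarrow>
     g x = c 0 + c 1 * x$1 + c 2 * x$2 + c 3 * x$3
         + c 4 * (x$1)^2 + c 5 * (x$2)^2 + c 6 * (x$3)^2
         + c 7 * x$1 * x$2 + c 8 * x$2 * x$3 + c 9 * x$3 * x$1
         + c 10 * x$1 * x$2 * x$3 + c 11 * (x$1)^2 * x$2
         + c 12 * (x$2)^2 * x$3 + c 13 * (x$3)^2 * x$1"
    using assms unfolding in_PSK_def by blast
  consider "i = 1" | "i = 2" | "i = 3" using exhaust_3 by blast
  then show thesis
  proof cases
    case 1
    show thesis
    proof (rule that[of "c 5" "c 12"], rule bexI)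
      fix \<sigma> :: real assume "\<bar>\<sigma>\<bar> \<le> 1"
      let ?p = "\<lambda>s t. (c 0 + c 1 * \<sigma> + c 4 * \<sigma>^2) + (c 2 + c 7 * \<sigma> + c 11 * \<sigma>^2) * s
        + (c 3 + c 9 * \<sigma>) * t + (c 8 + c 10 * \<sigma>) * s * t + (c 6 + c 13 * \<sigma>) * t^2"
      show "?p \<in> face_space" unfolding face_space_def by blast
      show "\<forall>s t. \<bar>s\<bar> \<le> 1 \<longrightarrow> \<bar>t\<bar> \<le> 1 \<longrightarrow> g (facepoint i \<sigma> s t) = ?p s t + c 5 * s^2 + c 12 * s^2 * t"
        using c[OF facepoint_Kref] \<open>\<bar>\<sigma>\<bar> \<le> 1\<close> by (simp add: 1 facepoint_def algebra_simps)
    qed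
  next
    case 2
    show thesis
    proof (rule that[of "c 6" "c 13"], rule bexI)
      fix \<sigma> :: real assume "\<bar>\<sigma>\<bar> \<le> 1"
      let ?p = "\<lambda>s t. (c 0 + c 2 * \<sigma> + c 5 * \<sigma>^2) + (c 3 + c 8 * \<sigma> + c 12 * \<sigma>^2) * s
        + (c 1 + c 7 * \<sigma>) * t + (c 9 + c 10 * \<sigma>) * s * t + (c 4 + c 11 * \<sigma>) * t^2"
      show "?p \<in> face_space" unfolding face_space_def by blast
      show "\<forall>s t. \<bar>s\<bar> \<le> 1 \<longrightarrow> \<bar>t\<bar> \<le> 1 \<longrightarrow> g (facepoint i \<sigma> s t) = ?p s t + c 6 * s^2 + c 13 * s^2 * t"
        using c[OF facepoint_Kref] \<open>\<bar>\<sigma>\<bar> \<le> 1\<close> by (simp add: 2 facepoint_def algebra_simps)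
    qed
  next
    case 3
    show thesis
    proof (rule that[of "c 4" "c 11"], rule bexI)
      fix \<sigma> :: real assume "\<bar>\<sigma>\<bar> \<le> 1"
      let ?p = "\<lambda>s t. (c 0 + c 3 * \<sigma> + c 6 * \<sigma>^2) + (c 1 + c 9 * \<sigma> + c 13 * \<sigma>^2) * s
        + (c 2 + c 8 * \<sigma>) * t + (c 7 + c 10 * \<sigma>) * s * t + (c 5 + c 12 * \<sigma>) * t^2"
      show "?p \<in> face_space" unfolding face_space_def by blast
      show "\<forall>s t. \<bar>s\<bar> \<le> 1 \<longrightarrow> \<bar>t\<bar> \<le> 1 \<longrightarrow> g (facepoint i \<sigma> s t) = ?p s t + c 4 * s^2 + c 11 * s^2 * t"
        using c[OF facepoint_Kref] \<open>\<bar>\<sigma>\<bar> \<le> 1\<close> by (simp add: 3 facepoint_def algebra_simps)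
    qed
  qed
qed

lemma in_PSK_face_interp_error_opposite_faces:
  assumes "in_PSK g" "\<bar>s\<bar> \<le> 1" "\<bar>t\<bar> \<le> 1"
  shows "g (facepoint i 1 s t) - face_interp i 1 g s t
       = g (facepoint i (-1) s t) - face_interp i (-1) g s t"
proof -
  obtain a b where restr: "\<And>\<sigma>. \<bar>\<sigma>\<bar> \<le> 1 \<Longrightarrow> \<exists>p\<in>face_space. \<forall>s t. \<bar>s\<bar> \<le> 1 \<longrightarrow> \<bar>t\<bar> \<le> 1 \<longrightarrow>
      g (facepoint i \<sigma> s t) = p s t + a * s^2 + b * s^2 * t"
    using in_PSK_face_restriction[OF assms(1)] by blast
  have error: "g (facepoint i \<sigma> s t) - face_interp i \<sigma> g s t = a * (s^2 - t^2) + b * (s^2 * t - t)"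
    if \<sigma>: "\<bar>\<sigma>\<bar> \<le> 1" for \<sigma>
  proof -
    obtain p where "p \<in> face_space"
      and "\<forall>s t. \<bar>s\<bar> \<le> 1 \<longrightarrow> \<bar>t\<bar> \<le> 1 \<longrightarrow> g (facepoint i \<sigma> s t) = p s t + a * s^2 + b * s^2 * t"
      using restr[OF \<sigma>] by blast
    then show ?thesis using face_interp_error assms(2,3) by blast
  qed
  show ?thesis using error[of 1] error[of "-1"] by simp
qed

theorem lemma4:
  fixes \<Omega> :: "(real^3) set" and Th :: "(real^3 \<Rightarrow> real^3) set"
    and w :: "(real^3 \<Rightarrow> real^3) \<Rightarrow> real^3 \<Rightarrow> real" and T :: "real^3 \<Rightarrow> real^3"
  assumes "parallelepiped \<Omega>" and "partition_pp \<Omega> Th" and "T \<in> Th" and "NC0h \<Omega> Th w"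
  shows "in_PSK (\<lambda>x. w T (T x)) \<and>
    (\<forall>i::3. \<forall>s t. \<bar>s\<bar> \<le> 1 \<longrightarrow> \<bar>t\<bar> \<le> 1 \<longrightarrow>
       w T (T (facepoint i 1 s t)) - face_interp i 1 (\<lambda>x. w T (T x)) s t
     = w T (T (facepoint i (-1) s t)) - face_interp i (-1) (\<lambda>x. w T (T x)) s t)"
proof -
  have "in_PSK (\<lambda>x. w T (T x))"
    using assms(3,4) unfolding NC0h_def by blast
  then show ?thesis
    using in_PSK_face_interp_error_opposite_faces[where g = "\<lambda>x. w T (T x)"] by blast
qed

end
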